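(* Let $A\in\mathbb{R}^{3\times 3}$ with $\operatorname{tr}A=0$, and suppose there is a real invertible matrix $S$ such that $S^{-1}AS = D + B$, where $$D=\begin{bmatrix}\varepsilon_1&0&0\\0&\varepsilon_2&0\\0&0&\varepsilon_3\end{bmatrix},\qquad B=\begin{bmatrix}0&r&0\\-r&0&0\\0&0&0\end{bmatrix},$$ with $\varepsilon_1,\varepsilon_2,\varepsilon_3,r\in\mathbb{R}$, and with $\varepsilon_1=\varepsilon_2$ whenever $r\neq 0$ (so that $DB=BD$). (This covers every trace-free $A$ that is diagonalizable over $\mathbb{R}$, with $B=0$, and every trace-free $A$ with a pair of non-real complex eigenvalues.) Let $M_1,M_2\in SL(3,\mathbb{Z})$ be symmetric, commuting, with positive eigenvalues. Let $V$ be an orthogonal matrix with $V^{-1}M_iV=\Lambda_i=\operatorname{diag}(\lambda_{i,1},\lambda_{i,2},\lambda_{i,3})$ for $i=1,2$, put $\hat\omega_i=(\log\lambda_{i,1},\log\lambda_{i,2},\log\lambda_{i,3})^T$, and assume $\hat\omega_1,\hat\omega_2$ are linearly independent. Let $L_t=e^{At}\,S\,V^{-1}$ for $t\ge 0$. Then: (i) For every $t\ge 0$ there exist integers $n_1,n_2$ and $\theta_1,\theta_2\in(-\tfrac12,\tfrac12]$ such that $$L_t M_1^{n_1}M_2^{n_2} = S\,e^{Bt}\,\exp\!\big(\operatorname{diag}(\theta_1\hat\omega_1+\theta_2\hat\omega_2)\big)\,V^{-1},$$ where $\operatorname{diag}(x)$ denotes the diagonal matrix with diagonal $x$; moreover $\{L_t\mathbf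 n:\mathbf n\in\mathbb{Z}^3\}=\{L_tM_1^{n_1}M_2^{n_2}\mathbf n:\mathbf n\in\mathbb{Z}^3\}$. (ii) There is a constant $c>0$, independent of $t$, such that $\min_{\mathbf n\in\mathbb{Z}^3\setminus\{0\}}\|L_t\mathbf n\|\ge c$ for all $t\ge 0$; i.e., the minimum distance between a point and its periodic replicas in the lattice generated by the columns of $L_t$ stays bounded below for all time.
   Context: $SL(3,\mathbb{Z})$ denotes the group of $3\times 3$ integer matrices with determinant $1$. The columns of $L_t$ are the lattice basis vectors of a periodic simulation box deforming with the homogeneous linear flow with velocity gradient $A$, i.e. $\frac{d}{dt}L_t=AL_t$; periodic replicas of a point $\mathbf q$ are the points $\mathbf q+L_t\mathbf n$, $\mathbf n\in\mathbb{Z}^3$. The matrix exponential $\exp$ of a diagonal matrix is the diagonal matrix of exponentials of its entries; $\|\cdot\|$ is the Euclidean norm. *)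

theory Defs
  imports "HOL-Analysis.Analysis"
begin

primrec matpow :: "real^'n^'n \<Rightarrow> nat \<Rightarrow> real^'n^'n" where
  "matpow M 0 = mat 1"
| "matpow M (Suc k) = M ** matpow M k"

definition matpow_int :: "real^'n^'n \<Rightarrow> int \<Rightarrow> real^'n^'n" where
  "matpow_int M k = (if 0 \<le> k then matpow M (nat k) else matpow (matrix_inv M) (nat (- k)))"

definition mexp :: "real^'n^'n \<Rightarrow> real^'n^'n" where
  "mexp M = (\<Sum>k. (1 / fact k) *\<^sub>R matpow M k)"

definition diagm :: "real^'n \<Rightarrow> real^'n^'n" where
  "diagm x = (\<chi> i j. if i = j then x $ i else 0)"

definition diag_exp :: "real^'n \<Rightarrow> real^'n^'n" where
  "diag_exp x = diagm (\<chi> i. exp (x $ i))"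

definition int_vecs :: "(real^'n) set" where
  "int_vecs = {v. \<forall>i. v $ i \<in> \<int>}"

definition SL_Z :: "(real^'n^'n) set" where
  "SL_Z = {M. (\<forall>i j. M $ i $ j \<in> \<int>) \<and> det M = 1}"

end

theory Submission
  imports Defs
begin

text \<open>Since \<open>D\<close> and \<open>B\<close> commute, \<open>e\<^bsup>At\<^esup> = S e\<^bsup>Bt\<^esup> e\<^bsup>Dt\<^esup> S\<^sup>-\<^sup>1\<close> with \<open>e\<^bsup>Bt\<^esup>\<close> a rotation,
  and \<open>M\<^sub>1\<^bsup>n\<^sub>1\<^esup> M\<^sub>2\<^bsup>n\<^sub>2\<^esup> = V exp(diag(n\<^sub>1\<omega>\<^sub>1 + n\<^sub>2\<omega>\<^sub>2)) V\<^sup>-\<^sup>1\<close>. As \<open>tr A = 0\<close> and \<open>det M\<^sub>i = 1\<close>,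
  the vectors \<open>t\<epsilon>\<close>, \<open>\<omega>\<^sub>1\<close>, \<open>\<omega>\<^sub>2\<close> lie in the plane of trace-free vectors, which \<open>\<omega>\<^sub>1, \<omega>\<^sub>2\<close>
  span; reducing the coordinates of \<open>t\<epsilon>\<close> in this basis modulo \<open>\<int>\<close> gives (i), and the
  unimodular integer matrix \<open>M\<^sub>1\<^bsup>n\<^sub>1\<^esup> M\<^sub>2\<^bsup>n\<^sub>2\<^esup>\<close> does not change the lattice. In the reduced
  basis \<open>L\<^sub>t = S R\<^sub>t exp(diag u\<^sub>t) V\<^sup>-\<^sup>1\<close> with \<open>R\<^sub>t\<close>, \<open>V\<close> orthogonal and \<open>u\<^sub>t\<close> bounded
  uniformly in \<open>t\<close>; as nonzero integer vectors have norm at least \<open>1\<close>, this gives (ii).\<close>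

section \<open>Inverses and similarity\<close>

lemma matrix_inv_right:
  fixes A :: "'a::semiring_1^'n^'n"
  assumes "invertible A"
  shows "A ** matrix_inv A = mat 1"
  using someI_ex[OF assms[unfolded invertible_def]] unfolding matrix_inv_def by blast

lemma matrix_inv_left:
  fixes A :: "'a::semiring_1^'n^'n"
  assumes "invertible A"
  shows "matrix_inv A ** A = mat 1"
  using someI_ex[OF assms[unfolded invertible_def]] unfolding matrix_inv_def by blast

lemma matrix_inv_unique:
  fixes A X :: "real^'n^'n"
  assumes "A ** X = mat 1"
  shows "matrix_inv A = X"
proof -
  have "X ** A = mat 1" using assms matrix_left_right_inverse by blast
  then have "invertible A" using assms unfolding invertible_def by blast
  have "matrix_inv A = matrix_inv A ** (A ** X)" by (simp add: assms)
  also have "\<dots> = X" by (simp add: matrix_mul_assoc matrix_inv_left[OF \<open>invertible A\<close>])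
  finally show ?thesis .
qed

lemma eq_conj_of_matrix_inv_conj:
  fixes M V D :: "real^'n^'n"
  assumes "invertible V" "matrix_inv V ** M ** V = D"
  shows "M = V ** D ** matrix_inv V"
proof -
  have "V ** D ** matrix_inv V = (V ** matrix_inv V) ** M ** (V ** matrix_inv V)"
    by (simp add: assms(2)[symmetric] matrix_mul_assoc)
  then show ?thesis by (simp add: matrix_inv_right[OF assms(1)])
qed

lemma trace_matrix_inv_conj:
  fixes A S :: "real^'n^'n"
  assumes "invertible S"
  shows "trace (matrix_inv S ** A ** S) = trace A"
  by (metis trace_mul_sym matrix_mul_assoc matrix_mul_lid matrix_inv_right[OF assms])

lemma matpow_conj:
  fixes S X :: "real^'n^'n"
  assumes "invertible S"
  shows "matpow (S ** X ** matrix_inv S) k = S ** matpow X k ** matrix_inv S"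
proof (induction k)
  case 0
  then show ?case by (simp add: matrix_inv_right[OF assms])
next
  case (Suc k)
  then show ?case
    by (simp add: matrix_mul_assoc)
      (simp add: matrix_mul_assoc[symmetric] matrix_inv_left[OF assms])
qed

section \<open>Matrix exponentials\<close>

lemma mexp_eqI: "(\<lambda>k. (1 / fact k) *\<^sub>R matpow M k) sums E \<Longrightarrow> mexp M = E"
  unfolding mexp_def by (rule sums_unique[symmetric])

lemma sums_matrix_entrywise:
  fixes f :: "nat \<Rightarrow> real^'n^'m"
  assumes "\<And>i j. (\<lambda>k. f k $ i $ j) sums (E $ i $ j)"
  shows "f sums E"
  using assms unfolding sums_def
  by (intro vec_tendstoI) simp

lemma matrix_add_rdistrib: "(A + B) ** C = A ** C + B ** C"
  by (simp add: matrix_matrix_mult_def vec_eq_iff sum.distrib distrib_right)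

lemma scaleR_matrix_mul_conj:
  fixes S M T :: "real^'n^'n"
  shows "k *\<^sub>R (S ** M ** T) = S ** (k *\<^sub>R M) ** T"
  by (simp add: matrix_scalar_ac scalar_matrix_assoc)

lemma sums_mexp_conj:
  fixes S X E :: "real^'n^'n"
  assumes "invertible S" "(\<lambda>k. (1 / fact k) *\<^sub>R matpow X k) sums E"
  shows "mexp (S ** X ** matrix_inv S) = S ** E ** matrix_inv S"
proof (rule mexp_eqI)
  have "linear (\<lambda>M. S ** M ** matrix_inv S)"
    by (rule linearI) (simp_all add: matrix_add_ldistrib matrix_add_rdistrib matrix_scalar_ac
        scalar_matrix_assoc[symmetric])
  then have "bounded_linear (\<lambda>M. S ** M ** matrix_inv S)"
    by (simp add: linear_conv_bounded_linear)
  from bounded_linear.sums[OF this assms(2)]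
  show "(\<lambda>k. (1 / fact k) *\<^sub>R matpow (S ** X ** matrix_inv S) k) sums (S ** E ** matrix_inv S)"
    by (simp add: matpow_conj[OF assms(1)] scaleR_matrix_mul_conj)
qed

lemma diagm_mult: "diagm x ** diagm y = diagm (\<chi> i. x $ i * y $ i)"
  unfolding diagm_def matrix_matrix_mult_def
  by (simp add: vec_eq_iff if_distrib[of "\<lambda>a. a * _"] sum.delta cong: if_cong)

lemma mat_1_eq_diagm: "mat 1 = diagm (\<chi> i. 1)"
  by (simp add: diagm_def mat_def vec_eq_iff)

lemma matpow_diagm: "matpow (diagm x) k = diagm (\<chi> i. x $ i ^ k)"
  by (induction k) (simp_all add: mat_1_eq_diagm diagm_mult)

lemma diagm_mult_axis: "diagm x *v axis j 1 = x $ j *\<^sub>R axis j 1"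
  unfolding diagm_def matrix_vector_mult_def axis_def
  by (simp add: vec_eq_iff if_distrib[of "\<lambda>a. a * _"] sum.delta cong: if_cong)

lemma det_diagm: "det (diagm x) = prod (($) x) UNIV"
  by (simp add: det_diagonal diagm_def)

lemma sums_exp_diagm: "(\<lambda>k. (1 / fact k) *\<^sub>R matpow (diagm x) k) sums diag_exp x"
proof (rule sums_matrix_entrywise)
  fix i j
  have entry: "((1 / fact k) *\<^sub>R matpow (diagm x) k) $ i $ j
      = (if i = j then x $ i ^ k / fact k else 0)"
    for k :: nat
    unfolding matpow_diagm by (simp add: diagm_def)
  have "(\<lambda>k. x $ i ^ k / fact k) sums exp (x $ i)"
    using exp_converges[of "x $ i"] by (simp add: divide_inverse mult.commute)
  then show "(\<lambda>k. ((1 / fact k) *\<^sub>R matpow (diagm x) k) $ i $ j) sums (diag_exp x $ i $ j)"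
    unfolding entry by (cases "i = j") (simp_all add: diag_exp_def diagm_def)
qed

lemma diag_exp_add: "diag_exp x ** diag_exp y = diag_exp (x + y)"
  by (simp add: diag_exp_def diagm_mult exp_add)

lemma diag_exp_conj_mult:
  fixes V X :: "real^'n^'n"
  assumes "invertible V"
  shows "X ** diag_exp a ** matrix_inv V ** (V ** diag_exp b ** matrix_inv V)
    = X ** diag_exp (a + b) ** matrix_inv V"
proof -
  have "X ** diag_exp a ** matrix_inv V ** (V ** diag_exp b ** matrix_inv V)
      = X ** (diag_exp a ** (matrix_inv V ** V) ** diag_exp b) ** matrix_inv V"
    by (simp add: matrix_mul_assoc)
  then show ?thesis by (simp add: matrix_inv_left[OF assms] diag_exp_add)
qed

lemma trace_diagm: "trace (diagm x) = sum (($) x) UNIV"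
  by (simp add: trace_def diagm_def)

definition rot_gen :: "real \<Rightarrow> real^3^3" where
  "rot_gen r = (\<chi> i j. if i = 1 \<and> j = 2 then r else if i = 2 \<and> j = 1 then - r else 0)"

text \<open>Multiplication by \<open>z\<close> on the first two coordinates, read as the complex number
  \<open>x\<^sub>1 - \<i> x\<^sub>2\<close>, and by \<open>w\<close> on the third. These matrices form a commutative algebra
  isomorphic to \<open>\<complex> \<times> \<real>\<close> that contains \<open>diagm x + rot_gen a\<close> whenever \<open>x\<^sub>1 = x\<^sub>2\<close>,
  so powers and exponentials of such matrices are computed in \<open>\<complex>\<close>.\<close>
definition cmult_block :: "complex \<Rightarrow> real \<Rightarrow> real^3^3" where
  "cmult_block z w = (\<chi> i j.
     if i = 1 \<and> j = 1 then Re z else if i = 1 \<and> j = 2 then Im z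
     else if i = 2 \<and> j = 1 then - Im z else if i = 2 \<and> j = 2 then Re z
     else if i = 3 \<and> j = 3 then w else 0)"

lemma cmult_block_mult: "cmult_block z w ** cmult_block z' w' = cmult_block (z * z') (w * w')"
  by (simp add: cmult_block_def matrix_matrix_mult_def vec_eq_iff forall_3 sum_3 algebra_simps)

lemma mat_1_eq_cmult_block: "mat 1 = cmult_block 1 1"
  by (simp add: cmult_block_def mat_def vec_eq_iff forall_3)

lemma matpow_cmult_block: "matpow (cmult_block z w) k = cmult_block (z ^ k) (w ^ k)"
  by (induction k) (simp_all add: mat_1_eq_cmult_block cmult_block_mult)

lemma sums_exp_cmult_block:
  "(\<lambda>k. (1 / fact k) *\<^sub>R matpow (cmult_block z w) k) sums cmult_block (exp z) (exp w)"
proof (rule sums_matrix_entrywise)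
  fix i j :: 3
  have z: "(\<lambda>k. z ^ k /\<^sub>R fact k) sums exp z" by (rule exp_converges)
  have re: "(\<lambda>k. Re (z ^ k) / fact k) sums Re (exp z)"
    using sums_Re[OF z] by (simp add: divide_inverse mult.commute)
  have im: "(\<lambda>k. Im (z ^ k) / fact k) sums Im (exp z)"
    using sums_Im[OF z] by (simp add: divide_inverse mult.commute)
  have w: "(\<lambda>k. w ^ k / fact k) sums exp w"
    using exp_converges[of w] by (simp add: divide_inverse mult.commute)
  show "(\<lambda>k. ((1 / fact k) *\<^sub>R matpow (cmult_block z w) k) $ i $ j)
      sums (cmult_block (exp z) (exp w) $ i $ j)"
    using re im sums_minus[OF im] w exhaust_3[of i] exhaust_3[of j]
    unfolding matpow_cmult_block by (auto simp: cmult_block_def)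
qed

lemma transpose_cmult_block: "transpose (cmult_block z w) = cmult_block (cnj z) w"
  by (simp add: cmult_block_def transpose_def vec_eq_iff forall_3)

lemma orthogonal_cmult_block:
  assumes "cmod z = 1" "\<bar>w\<bar> = 1"
  shows "orthogonal_matrix (cmult_block z w)"
proof -
  have "cnj z * z = 1"
    using assms(1) by (metis complex_norm_square mult.commute of_real_1 power_one)
  moreover have "w * w = 1" using assms(2) by (metis abs_mult_self_eq mult_1)
  ultimately show ?thesis
    by (simp add: orthogonal_matrix transpose_cmult_block cmult_block_mult mat_1_eq_cmult_block)
qed

lemma mexp_rot_gen: "mexp (rot_gen a) = cmult_block (exp (\<i> * a)) 1"
proof -
  have "rot_gen a = cmult_block (\<i> * a) 0"
    by (simp add: rot_gen_def cmult_block_def vec_eq_iff forall_3)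
  then show ?thesis
    using mexp_eqI[OF sums_exp_cmult_block] by simp
qed

lemma orthogonal_mexp_rot_gen: "orthogonal_matrix (mexp (rot_gen a))"
  unfolding mexp_rot_gen by (rule orthogonal_cmult_block) (simp_all add: norm_exp_i_times)

lemma scaleR_rot_gen: "t *\<^sub>R rot_gen a = rot_gen (t * a)"
  by (simp add: rot_gen_def vec_eq_iff forall_3)

lemma trace_rot_gen: "trace (rot_gen a) = 0"
  by (simp add: trace_def rot_gen_def sum_3)

lemma sums_exp_diagm_add_rot_gen:
  fixes x :: "real^3"
  assumes "a \<noteq> 0 \<Longrightarrow> x $ 1 = x $ 2"
  shows "(\<lambda>k. (1 / fact k) *\<^sub>R matpow (diagm x + rot_gen a) k)
    sums (mexp (rot_gen a) ** diag_exp x)"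
proof (cases "a = 0")
  case True
  have "rot_gen 0 = 0" by (simp add: rot_gen_def vec_eq_iff)
  moreover from this have "mexp 0 = (mat 1 :: real^3^3)"
    using mexp_rot_gen[of 0] by (simp add: mat_1_eq_cmult_block)
  ultimately show ?thesis using True by (simp add: sums_exp_diagm)
next
  case False
  then have x12: "x $ 2 = x $ 1" using assms by simp
  have "diagm x + rot_gen a = cmult_block (Complex (x $ 1) a) (x $ 3)"
    using x12 by (simp add: rot_gen_def diagm_def cmult_block_def vec_eq_iff forall_3)
  moreover have "cmult_block (exp (Complex (x $ 1) a)) (exp (x $ 3))
      = mexp (rot_gen a) ** diag_exp x"
    using x12 by (simp add: mexp_rot_gen cmult_block_def diag_exp_def diagm_def
        matrix_matrix_mult_def vec_eq_iff forall_3 sum_3 Re_exp Im_exp)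
  ultimately show ?thesis using sums_exp_cmult_block by metis
qed

lemma mexp_similar_diagm_add_rot_gen:
  fixes A S :: "real^3^3"
  assumes "invertible S" "matrix_inv S ** A ** S = diagm x + rot_gen a"
    and "a \<noteq> 0 \<Longrightarrow> x $ 1 = x $ 2"
  shows "mexp (t *\<^sub>R A) = S ** mexp (t *\<^sub>R rot_gen a) ** diag_exp (t *\<^sub>R x) ** matrix_inv S"
proof -
  have "t *\<^sub>R (diagm x + rot_gen a) = diagm (t *\<^sub>R x) + rot_gen (t * a)"
    by (simp add: scaleR_right_distrib scaleR_rot_gen diagm_def vec_eq_iff)
  then have tA: "t *\<^sub>R A = S ** (diagm (t *\<^sub>R x) + rot_gen (t * a)) ** matrix_inv S"
    unfolding eq_conj_of_matrix_inv_conj[OF assms(1,2)] scaleR_matrix_mul_conj by simp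
  have "t * a \<noteq> 0 \<Longrightarrow> (t *\<^sub>R x) $ 1 = (t *\<^sub>R x) $ 2" using assms(3) by simp
  from sums_mexp_conj[OF assms(1) sums_exp_diagm_add_rot_gen[of "t * a", OF this]]
  show ?thesis unfolding tA scaleR_rot_gen by (simp add: matrix_mul_assoc)
qed

section \<open>Positive spectra of unimodular matrices\<close>

lemma det_matrix_inv_conj:
  fixes M V :: "real^'n^'n"
  assumes "invertible V"
  shows "det (matrix_inv V ** M ** V) = det M"
proof -
  have "det (matrix_inv V) * det V = 1"
    using det_mul[of "matrix_inv V" V] by (simp add: matrix_inv_left[OF assms] det_I)
  then show ?thesis by (simp add: det_mul)
qed

lemma diagm_pos_of_pos_eigenvalues:
  fixes M V :: "real^'n^'n"
  assumes V: "invertible V" and eq: "matrix_inv V ** M ** V = diagm lam"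
    and pos: "\<And>\<mu> v. v \<noteq> 0 \<Longrightarrow> M *v v = \<mu> *\<^sub>R v \<Longrightarrow> \<mu> > 0"
  shows "lam $ j > 0"
proof -
  define v where "v = V *v axis j 1"
  have "M ** V = V ** diagm lam"
    using eq_conj_of_matrix_inv_conj[OF V eq] by (simp add: matrix_mul_assoc[symmetric])
      (simp add: matrix_mul_assoc matrix_inv_left[OF V])
  then have "M *v v = lam $ j *\<^sub>R v"
    by (simp add: v_def matrix_vector_mul_assoc diagm_mult_axis matrix_vector_mult_scaleR
        flip: matrix_vector_mul_assoc[of V])
  moreover have "axis j (1::real) = matrix_inv V *v v"
    by (simp add: v_def matrix_vector_mul_assoc matrix_inv_left[OF V])
  then have "v \<noteq> 0" by (auto simp: axis_eq_0_iff)
  ultimately show ?thesis using pos by blast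
qed

lemma matpow_int_eq_conj_diag_exp:
  fixes M V :: "real^'n^'n"
  assumes V: "invertible V" and eq: "matrix_inv V ** M ** V = diagm lam"
    and pos: "\<And>j. lam $ j > 0"
  shows "matpow_int M n = V ** diag_exp (of_int n *\<^sub>R (\<chi> j. ln (lam $ j))) ** matrix_inv V"
proof -
  have M: "M = V ** diagm lam ** matrix_inv V" by (rule eq_conj_of_matrix_inv_conj[OF V eq])
  have "M ** (V ** diagm (\<chi> j. 1 / lam $ j) ** matrix_inv V) = mat 1"
    unfolding M using pos
    by (simp add: matrix_mul_assoc) (simp add: matrix_mul_assoc[symmetric] matrix_inv_left[OF V]
        diagm_mult matrix_inv_right[OF V] less_imp_neq[symmetric] flip: mat_1_eq_diagm)
  then have Minv: "matrix_inv M = V ** diagm (\<chi> j. 1 / lam $ j) ** matrix_inv V"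
    by (rule matrix_inv_unique)
  show ?thesis
  proof (cases "0 \<le> n")
    case True
    then obtain m where "n = int m" by (metis nonneg_int_cases)
    then show ?thesis
      using pos by (simp add: matpow_int_def M matpow_conj[OF V] matpow_diagm diag_exp_def
          exp_of_nat_mult)
  next
    case False
    then obtain m where "n = - int m" by (metis nle_le nonpos_int_cases)
    moreover have "exp (- (real m * ln (lam $ i))) = (1 / lam $ i) ^ m" for i
      using pos[of i] by (simp add: exp_minus exp_of_nat_mult power_one_over inverse_eq_divide)
    ultimately show ?thesis
      using False by (simp add: matpow_int_def Minv matpow_conj[OF V] matpow_diagm diag_exp_def)
  qed
qed

lemma sum_ln_eigenvalues_eq_0:
  fixes M V :: "real^'n^'n"
  assumes V: "invertible V" and eq: "matrix_inv V ** M ** V = diagm lam"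
    and "det M = 1" and pos: "\<And>j. lam $ j > 0"
  shows "(\<Sum>j\<in>UNIV. ln (lam $ j)) = 0"
proof -
  have "prod (($) lam) UNIV = 1"
    using det_matrix_inv_conj[OF V, of M] assms(3) by (simp add: eq det_diagm)
  then show ?thesis using pos ln_prod[of UNIV "($) lam"] by (simp add: less_imp_neq[symmetric])
qed

lemma log_spectrum_SL_Z:
  fixes M V :: "real^'n^'n"
  assumes "M \<in> SL_Z" "invertible V" "matrix_inv V ** M ** V = diagm lam"
    and "\<And>\<mu> v. v \<noteq> 0 \<Longrightarrow> M *v v = \<mu> *\<^sub>R v \<Longrightarrow> \<mu> > 0"
  shows "matpow_int M n = V ** diag_exp (of_int n *\<^sub>R (\<chi> j. ln (lam $ j))) ** matrix_inv V"
    and "sum (($) (\<chi> j. ln (lam $ j))) UNIV = 0"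
proof -
  have pos: "lam $ j > 0" for j by (rule diagm_pos_of_pos_eigenvalues[OF assms(2-4)])
  show "matpow_int M n = V ** diag_exp (of_int n *\<^sub>R (\<chi> j. ln (lam $ j))) ** matrix_inv V"
    by (rule matpow_int_eq_conj_diag_exp[OF assms(2,3) pos])
  show "sum (($) (\<chi> j. ln (lam $ j))) UNIV = 0"
    using sum_ln_eigenvalues_eq_0[OF assms(2,3) _ pos] assms(1) by (simp add: SL_Z_def)
qed

section \<open>Unimodular integer matrices, lattices and norms\<close>

lemma SL_Z_mult: "M \<in> SL_Z \<Longrightarrow> N \<in> SL_Z \<Longrightarrow> M ** N \<in> SL_Z"
  unfolding SL_Z_def
  by (simp add: det_mul) (auto simp: matrix_matrix_mult_def intro!: Ints_sum Ints_mult)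

lemma SL_Z_mat_1: "mat 1 \<in> SL_Z"
  unfolding SL_Z_def by (simp add: det_I) (simp add: mat_def)

lemma SL_Z_matpow: "M \<in> SL_Z \<Longrightarrow> matpow M k \<in> SL_Z"
  by (induction k) (simp_all add: SL_Z_mat_1 SL_Z_mult)

lemma SL_Z_mult_int_vecs: "M \<in> SL_Z \<Longrightarrow> v \<in> int_vecs \<Longrightarrow> M *v v \<in> int_vecs"
  unfolding SL_Z_def int_vecs_def matrix_vector_mult_def by (auto intro!: Ints_sum Ints_mult)

definition adjugate3 :: "real^3^3 \<Rightarrow> real^3^3" where
  "adjugate3 M = (\<chi> i j.
     if i = 1 then
       (if j = 1 then M$2$2*M$3$3 - M$2$3*M$3$2
        else if j = 2 then M$1$3*M$3$2 - M$1$2*M$3$3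
        else M$1$2*M$2$3 - M$1$3*M$2$2)
     else if i = 2 then
       (if j = 1 then M$2$3*M$3$1 - M$2$1*M$3$3
        else if j = 2 then M$1$1*M$3$3 - M$1$3*M$3$1
        else M$1$3*M$2$1 - M$1$1*M$2$3)
     else
       (if j = 1 then M$2$1*M$3$2 - M$2$2*M$3$1
        else if j = 2 then M$1$2*M$3$1 - M$1$1*M$3$2
        else M$1$1*M$2$2 - M$1$2*M$2$1))"

lemma matrix_mul_adjugate3: "M ** adjugate3 M = det M *\<^sub>R mat 1"
  by (simp add: adjugate3_def matrix_matrix_mult_def vec_eq_iff forall_3 sum_3 det_3 mat_def
      algebra_simps)

lemma matrix_inv_SL_Z:
  fixes M :: "real^3^3"
  assumes "M \<in> SL_Z"
  shows "matrix_inv M \<in> SL_Z"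
proof -
  have "matrix_inv M = adjugate3 M"
    using assms by (intro matrix_inv_unique) (simp add: SL_Z_def matrix_mul_adjugate3)
  moreover have "det (adjugate3 M) = 1"
    using arg_cong[OF matrix_mul_adjugate3[of M], of det] assms by (simp add: SL_Z_def det_mul)
  ultimately show ?thesis
    using assms unfolding SL_Z_def adjugate3_def
    by (auto simp: forall_3 intro!: Ints_diff Ints_mult)
qed

lemma SL_Z_matpow_int: "(M :: real^3^3) \<in> SL_Z \<Longrightarrow> matpow_int M n \<in> SL_Z"
  by (simp add: matpow_int_def SL_Z_matpow matrix_inv_SL_Z)

lemma lattice_vector_mult_SL_Z:
  fixes L P :: "real^3^3"
  assumes "P \<in> SL_Z" "n \<in> int_vecs" "n \<noteq> 0"
  shows "\<exists>m\<in>int_vecs. m \<noteq> 0 \<and> L *v n = (L ** P) *v m"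
proof (intro bexI conjI)
  have PQ: "P ** matrix_inv P = mat 1"
    using assms(1) by (intro matrix_inv_right) (auto simp: invertible_det_nz SL_Z_def)
  then have "P *v (matrix_inv P *v n) = n" by (simp add: matrix_vector_mul_assoc)
  then show "matrix_inv P *v n \<noteq> 0" "L *v n = (L ** P) *v (matrix_inv P *v n)"
    using assms(3) by (auto simp: matrix_vector_mul_assoc[symmetric])
  show "matrix_inv P *v n \<in> int_vecs"
    by (rule SL_Z_mult_int_vecs[OF matrix_inv_SL_Z[OF assms(1)] assms(2)])
qed

lemma lattice_mult_SL_Z:
  fixes L P :: "real^3^3"
  assumes "P \<in> SL_Z"
  shows "{L *v n | n. n \<in> int_vecs} = {(L ** P) *v n | n. n \<in> int_vecs}"
proof -
  have PQ: "P ** matrix_inv P = mat 1"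
    using assms by (intro matrix_inv_right) (auto simp: invertible_det_nz SL_Z_def)
  have "L *v n \<in> {(L ** P) *v m | m. m \<in> int_vecs}" if "n \<in> int_vecs" for n
  proof -
    have "L *v n = (L ** P) *v (matrix_inv P *v n)"
      by (simp add: matrix_vector_mul_assoc PQ flip: matrix_mul_assoc)
    with SL_Z_mult_int_vecs[OF matrix_inv_SL_Z[OF assms] that] show ?thesis by blast
  qed
  moreover have "(L ** P) *v n \<in> {L *v m | m. m \<in> int_vecs}" if "n \<in> int_vecs" for n
    using SL_Z_mult_int_vecs[OF assms that] by (auto simp: matrix_vector_mul_assoc[symmetric])
  ultimately show ?thesis by blast
qed

lemma norm_ge_1_int_vecs:
  assumes "v \<in> int_vecs" "v \<noteq> 0"
  shows "1 \<le> norm v"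
proof -
  obtain i where "v $ i \<noteq> 0" "v $ i \<in> \<int>"
    using assms by (auto simp: vec_eq_iff int_vecs_def)
  then have "1 \<le> \<bar>v $ i\<bar>"
    by (metis Ints_cases of_int_0_eq_iff of_int_abs of_int_1_le_iff zero_less_abs_iff
        int_one_le_iff_zero_less)
  also have "\<dots> \<le> norm v" by (rule component_le_norm_cart)
  finally show ?thesis .
qed

lemma norm_orthogonal_matrix_mult:
  fixes Q :: "real^'n^'n"
  assumes "orthogonal_matrix Q"
  shows "norm (Q *v x) = norm x"
proof -
  have "orthogonal_transformation ((*v) Q)"
    using assms by (simp add: orthogonal_transformation_matrix)
  then show ?thesis by (simp add: orthogonal_transformation_norm)
qed

lemma invertible_norm_lower_bound:
  fixes X :: "real^'n^'n"
  assumes "invertible X"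
  obtains c where "c > 0" "\<And>x. c * norm x \<le> norm (X *v x)"
proof -
  obtain K where K: "K > 0" "\<And>y. norm (matrix_inv X *v y) \<le> norm y * K"
    using bounded_linear.pos_bounded[OF matrix_vector_mul_bounded_linear] by blast
  have "norm x \<le> norm (X *v x) * K" for x
    using K(2)[of "X *v x"] by (simp add: matrix_vector_mul_assoc matrix_inv_left[OF assms])
  then have "(1 / K) * norm x \<le> norm (X *v x)" for x
    using K(1) by (simp add: field_simps)
  with K(1) show thesis by (intro that[of "1 / K"]) auto
qed

lemma diag_exp_norm_lower_bound:
  assumes "\<And>j. \<bar>u $ j\<bar> \<le> K"
  shows "exp (- K) * norm x \<le> norm (diag_exp u *v x)"
proof -
  have "(diag_exp u *v x) $ j = exp (u $ j) * x $ j" for j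
    unfolding diag_exp_def diagm_def matrix_vector_mult_def
    by (simp add: if_distrib[of "\<lambda>a. a * _"] sum.delta cong: if_cong)
  moreover have "exp (- K) * \<bar>x $ j\<bar> \<le> exp (u $ j) * \<bar>x $ j\<bar>" for j
    using assms[of j] by (intro mult_right_mono) auto
  ultimately have "norm ((exp (- K) *\<^sub>R x) $ j) \<le> norm ((diag_exp u *v x) $ j)" for j
    by (simp add: abs_mult)
  then show ?thesis by (metis norm_le_componentwise_cart norm_scaleR abs_exp_cancel)
qed

section \<open>Reduction modulo the logarithmic spectra\<close>

lemma trace_zero_span:
  fixes w u x :: "real^3"
  assumes "sum (($) w) UNIV = 0" "sum (($) u) UNIV = 0" "sum (($) x) UNIV = 0"
    and indep: "\<And>a b. a *\<^sub>R w + b *\<^sub>R u = 0 \<Longrightarrow> a = 0 \<and> b = 0"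
  obtains a b where "x = a *\<^sub>R w + b *\<^sub>R u"
proof -
  have w3: "w $ 3 = - w $ 1 - w $ 2" and u3: "u $ 3 = - u $ 1 - u $ 2"
    and x3: "x $ 3 = - x $ 1 - x $ 2"
    using assms(1-3) by (simp_all add: sum_3)
  define d where "d = w $ 1 * u $ 2 - w $ 2 * u $ 1"
  have "d \<noteq> 0"
  proof
    assume "d = 0"
    then have "u $ 2 *\<^sub>R w + (- w $ 2) *\<^sub>R u = 0" "u $ 1 *\<^sub>R w + (- w $ 1) *\<^sub>R u = 0"
      by (simp_all add: vec_eq_iff forall_3 w3 u3 d_def algebra_simps)
    then have "w $ 1 = 0" "w $ 2 = 0" using indep by fastforce+
    then have "1 *\<^sub>R w + 0 *\<^sub>R u = 0" by (simp add: vec_eq_iff forall_3 w3)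
    then show False using indep by fastforce
  qed
  \<comment> \<open>Cramer's rule on the first two coordinates; the third follows from the trace condition.\<close>
  define a where "a = (x $ 1 * u $ 2 - x $ 2 * u $ 1) / d"
  define b where "b = (w $ 1 * x $ 2 - w $ 2 * x $ 1) / d"
  have "a * w $ 1 + b * u $ 1 = (x $ 1 * d) / d"
    by (simp add: a_def b_def d_def add_divide_distrib[symmetric] algebra_simps)
  moreover have "a * w $ 2 + b * u $ 2 = (x $ 2 * d) / d"
    by (simp add: a_def b_def d_def add_divide_distrib[symmetric] algebra_simps)
  ultimately have "x = a *\<^sub>R w + b *\<^sub>R u"
    using \<open>d \<noteq> 0\<close> by (simp add: vec_eq_iff forall_3 w3 u3 x3 algebra_simps)
  then show thesis by (rule that)
qed

lemma exists_int_shift_half_open: "\<exists>n::int. (a::real) + of_int n \<in> {-1/2<..1/2}"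
proof
  show "a + of_int \<lfloor>1/2 - a\<rfloor> \<in> {-1/2<..1/2}"
  proof -
    have "of_int \<lfloor>1/2 - a\<rfloor> \<le> 1/2 - a" "1/2 - a < of_int \<lfloor>1/2 - a\<rfloor> + 1" by linarith+
    then show ?thesis unfolding greaterThanAtMost_iff by (intro conjI; linarith)
  qed
qed

lemma reduce_mod_int_combinations:
  fixes x w u :: "real^3"
  assumes "sum (($) w) UNIV = 0" "sum (($) u) UNIV = 0" "sum (($) x) UNIV = 0"
    and "\<And>a b. a *\<^sub>R w + b *\<^sub>R u = 0 \<Longrightarrow> a = 0 \<and> b = 0"
  obtains n1 n2 :: int and \<theta>1 \<theta>2 :: real
  where "\<theta>1 \<in> {-1/2<..1/2}" "\<theta>2 \<in> {-1/2<..1/2}"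
    and "x + (of_int n1 *\<^sub>R w + of_int n2 *\<^sub>R u) = \<theta>1 *\<^sub>R w + \<theta>2 *\<^sub>R u"
proof -
  obtain a b where x: "x = a *\<^sub>R w + b *\<^sub>R u" using trace_zero_span[OF assms] .
  obtain n1 n2 :: int where "a + of_int n1 \<in> {-1/2<..1/2}" "b + of_int n2 \<in> {-1/2<..1/2}"
    using exists_int_shift_half_open by meson
  moreover have "x + (of_int n1 *\<^sub>R w + of_int n2 *\<^sub>R u)
      = (a + of_int n1) *\<^sub>R w + (b + of_int n2) *\<^sub>R u"
    unfolding x by (simp add: algebra_simps)
  ultimately show thesis by (rule that)
qed

lemma abs_component_half_open_combination_le:
  fixes w u :: "real^'n"
  assumes "\<theta>1 \<in> {-1/2<..1/2}" "\<theta>2 \<in> {-1/2<..1/2}"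
  shows "\<bar>(\<theta>1 *\<^sub>R w + \<theta>2 *\<^sub>R u) $ j\<bar> \<le> norm w + norm u"
proof -
  have "\<bar>(\<theta>1 *\<^sub>R w + \<theta>2 *\<^sub>R u) $ j\<bar> \<le> \<bar>\<theta>1\<bar> * \<bar>w $ j\<bar> + \<bar>\<theta>2\<bar> * \<bar>u $ j\<bar>"
    by (simp add: abs_mult[symmetric] abs_triangle_ineq)
  also have "\<dots> \<le> \<bar>w $ j\<bar> + \<bar>u $ j\<bar>"
    using assms by (intro add_mono mult_left_le_one_le) auto
  also have "\<dots> \<le> norm w + norm u"
    by (intro add_mono) (simp_all add: component_le_norm_cart)
  finally show ?thesis .
qed

lemma matrix_inv_orthogonal:
  fixes V :: "real^'n^'n"
  assumes "orthogonal_matrix V"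
  shows "matrix_inv V = transpose V"
  using assms by (intro matrix_inv_unique) (simp add: orthogonal_matrix_def)

lemma norm_factorization_lower_bound:
  fixes S R V :: "real^'n^'n"
  assumes S: "c \<ge> 0" "\<And>y. c * norm y \<le> norm (S *v y)"
    and "orthogonal_matrix R" "orthogonal_matrix V" "\<And>j. \<bar>u $ j\<bar> \<le> K"
  shows "c * exp (- K) * norm x \<le> norm ((S ** R ** diag_exp u ** matrix_inv V) *v x)"
proof -
  have "norm (matrix_inv V *v x) = norm x"
    unfolding matrix_inv_orthogonal[OF assms(4)]
    by (rule norm_orthogonal_matrix_mult) (simp add: assms(4))
  then have "exp (- K) * norm x \<le> norm (diag_exp u *v (matrix_inv V *v x))"
    using diag_exp_norm_lower_bound[OF assms(5), of "matrix_inv V *v x"] by simp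
  then have "c * exp (- K) * norm x \<le> c * norm (diag_exp u *v (matrix_inv V *v x))"
    using S(1) by (simp add: mult.assoc mult_left_mono)
  also have "\<dots> = c * norm (R *v (diag_exp u *v (matrix_inv V *v x)))"
    using assms(3) by (simp add: norm_orthogonal_matrix_mult)
  also have "\<dots> \<le> norm ((S ** R ** diag_exp u ** matrix_inv V) *v x)"
    using S(2)[of "R *v (diag_exp u *v (matrix_inv V *v x))"]
    by (simp add: matrix_vector_mul_assoc matrix_mul_assoc)
  finally show ?thesis .
qed

lemma conj_diag_exp_reduce:
  fixes V X :: "real^3^3" and x w u :: "real^3"
  assumes "invertible V" "sum (($) w) UNIV = 0" "sum (($) u) UNIV = 0" "sum (($) x) UNIV = 0"
    and "\<And>a b. a *\<^sub>R w + b *\<^sub>R u = 0 \<Longrightarrow> a = 0 \<and> b = 0"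
  shows "\<exists>n1 n2 :: int. \<exists>\<theta>1 \<theta>2. \<theta>1 \<in> {-1/2<..1/2} \<and> \<theta>2 \<in> {-1/2<..1/2} \<and>
    X ** diag_exp x ** matrix_inv V ** (V ** diag_exp (of_int n1 *\<^sub>R w) ** matrix_inv V)
      ** (V ** diag_exp (of_int n2 *\<^sub>R u) ** matrix_inv V)
    = X ** diag_exp (\<theta>1 *\<^sub>R w + \<theta>2 *\<^sub>R u) ** matrix_inv V"
proof -
  obtain n1 n2 :: int and \<theta>1 \<theta>2 where "\<theta>1 \<in> {-1/2<..1/2}" "\<theta>2 \<in> {-1/2<..1/2}"
    and "x + (of_int n1 *\<^sub>R w + of_int n2 *\<^sub>R u) = \<theta>1 *\<^sub>R w + \<theta>2 *\<^sub>R u"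
    using reduce_mod_int_combinations[OF assms(2-5)] .
  moreover from this(3)
  have "X ** diag_exp x ** matrix_inv V ** (V ** diag_exp (of_int n1 *\<^sub>R w) ** matrix_inv V)
      ** (V ** diag_exp (of_int n2 *\<^sub>R u) ** matrix_inv V)
    = X ** diag_exp (\<theta>1 *\<^sub>R w + \<theta>2 *\<^sub>R u) ** matrix_inv V"
    unfolding diag_exp_conj_mult[OF assms(1)] by (simp add: add.assoc)
  ultimately show ?thesis by blast
qed

lemma uniform_min_norm_of_reductions:
  fixes L R :: "'t \<Rightarrow> real^3^3" and S V M1 M2 :: "real^3^3"
  assumes "invertible S" "orthogonal_matrix V" "M1 \<in> SL_Z" "M2 \<in> SL_Z"
    and "\<And>t. orthogonal_matrix (R t)"
    and red: "\<And>t. \<exists>n1 n2 \<theta>1 \<theta>2. \<theta>1 \<in> {-1/2<..1/2} \<and> \<theta>2 \<in> {-1/2<..1/2} \<and>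
                 L t ** matpow_int M1 n1 ** matpow_int M2 n2
                   = S ** R t ** diag_exp (\<theta>1 *\<^sub>R w + \<theta>2 *\<^sub>R u) ** matrix_inv V"
  shows "\<exists>c>0. \<forall>t. \<forall>n\<in>int_vecs - {0}. c \<le> norm (L t *v n)"
proof -
  obtain c where c: "c > 0" "\<And>y. c * norm y \<le> norm (S *v y)"
    using invertible_norm_lower_bound[OF assms(1)] by blast
  define K where "K = norm w + norm u"
  have "c * exp (- K) \<le> norm (L t *v n)" if n: "n \<in> int_vecs" "n \<noteq> 0" for t n
  proof -
    obtain n1 n2 \<theta>1 \<theta>2 where \<theta>: "\<theta>1 \<in> {-1/2<..1/2}" "\<theta>2 \<in> {-1/2<..1/2}"
      and LP: "L t ** (matpow_int M1 n1 ** matpow_int M2 n2)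
        = S ** R t ** diag_exp (\<theta>1 *\<^sub>R w + \<theta>2 *\<^sub>R u) ** matrix_inv V"
      using red[of t] by (auto simp: matrix_mul_assoc)
    have P: "matpow_int M1 n1 ** matpow_int M2 n2 \<in> SL_Z"
      by (intro SL_Z_mult SL_Z_matpow_int assms(3,4))
    obtain m where m: "m \<in> int_vecs" "m \<noteq> 0"
      "L t *v n = (L t ** (matpow_int M1 n1 ** matpow_int M2 n2)) *v m"
      using lattice_vector_mult_SL_Z[OF P n] by blast
    have "c * exp (- K) \<le> c * exp (- K) * norm m"
      using norm_ge_1_int_vecs[OF m(1,2)] c(1) by simp
    also have "\<dots> \<le> norm (L t *v n)"
      unfolding m(3) LP K_def
      by (rule norm_factorization_lower_bound[OF _ c(2) assms(5) assms(2)])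
        (use c(1) abs_component_half_open_combination_le[OF \<theta>] in auto)
    finally show ?thesis .
  qed
  with c(1) show ?thesis by (intro exI[of _ "c * exp (- K)"]) auto
qed

theorem mainTheorem1:
  fixes A S D B V M1 M2 :: "real^3^3"
    and eps :: "real^3" and r :: real
    and lam1 lam2 :: "real^3"
    and L :: "real \<Rightarrow> real^3^3"
  assumes trA: "trace A = 0"
    and S_inv: "invertible S"
    and D_def: "D = diagm eps"
    and B_def: "B = (\<chi> i j. if i = 1 \<and> j = 2 then r else if i = 2 \<and> j = 1 then - r else 0)"
    and eps_eq: "r \<noteq> 0 \<Longrightarrow> eps $ 1 = eps $ 2"
    and SAS: "matrix_inv S ** A ** S = D + B"
    and M1_SL: "M1 \<in> SL_Z" and M2_SL: "M2 \<in> SL_Z"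
    and M1_sym: "transpose M1 = M1" and M2_sym: "transpose M2 = M2"
    and comm: "M1 ** M2 = M2 ** M1"
    and M1_pos: "\<And>\<mu> v. v \<noteq> 0 \<Longrightarrow> M1 *v v = \<mu> *\<^sub>R v \<Longrightarrow> \<mu> > 0"
    and M2_pos: "\<And>\<mu> v. v \<noteq> 0 \<Longrightarrow> M2 *v v = \<mu> *\<^sub>R v \<Longrightarrow> \<mu> > 0"
    and V_orth: "orthogonal_matrix V"
    and V1: "matrix_inv V ** M1 ** V = diagm lam1"
    and V2: "matrix_inv V ** M2 ** V = diagm lam2"
    and indep: "\<And>a b. a *\<^sub>R (\<chi> j. ln (lam1 $ j)) + b *\<^sub>R (\<chi> j. ln (lam2 $ j)) = 0
                 \<Longrightarrow> a = 0 \<and> b = 0"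
    and L_def: "\<And>t. L t = mexp (t *\<^sub>R A) ** S ** matrix_inv V"
  shows "(\<forall>t\<ge>0. \<exists>n1 n2 :: int. \<exists>\<theta>1 \<theta>2 :: real.
            \<theta>1 \<in> {-1/2<..1/2} \<and> \<theta>2 \<in> {-1/2<..1/2} \<and>
            L t ** matpow_int M1 n1 ** matpow_int M2 n2
              = S ** mexp (t *\<^sub>R B)
                  ** diag_exp (\<theta>1 *\<^sub>R (\<chi> j. ln (lam1 $ j)) + \<theta>2 *\<^sub>R (\<chi> j. ln (lam2 $ j)))
                  ** matrix_inv V \<and>
            {L t *v n | n. n \<in> int_vecs}
              = {(L t ** matpow_int M1 n1 ** matpow_int M2 n2) *v n | n. n \<in> int_vecs})
       \<and> (\<exists>c>0. \<forall>t\<ge>0. \<forall>n\<in>int_vecs - {0}. norm (L t *v n) \<ge> c)"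
  \<comment> \<open>Symmetry and commutativity of \<open>M\<^sub>1, M\<^sub>2\<close> only serve to produce the common orthogonal
      diagonaliser \<open>V\<close>, which is assumed here.\<close>
proof -
  define \<omega>1 where "\<omega>1 = (\<chi> j. ln (lam1 $ j))"
  define \<omega>2 where "\<omega>2 = (\<chi> j. ln (lam2 $ j))"
  have V: "invertible V" using V_orth by (auto simp: orthogonal_matrix_def invertible_def)
  have pow1: "matpow_int M1 n = V ** diag_exp (of_int n *\<^sub>R \<omega>1) ** matrix_inv V"
    "sum (($) \<omega>1) UNIV = 0" for n
    unfolding \<omega>1_def using log_spectrum_SL_Z[OF M1_SL V V1] M1_pos by blast+
  have pow2: "matpow_int M2 n = V ** diag_exp (of_int n *\<^sub>R \<omega>2) ** matrix_inv V"
    "sum (($) \<omega>2) UNIV = 0" for n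
    unfolding \<omega>2_def using log_spectrum_SL_Z[OF M2_SL V V2] M2_pos by blast+
  have B: "B = rot_gen r" unfolding B_def rot_gen_def ..
  have eps0: "sum (($) eps) UNIV = 0"
    using trace_matrix_inv_conj[OF S_inv, of A] trA
    by (simp add: SAS D_def B trace_diagm trace_rot_gen trace_add)
  have L: "L t = S ** mexp (t *\<^sub>R B) ** diag_exp (t *\<^sub>R eps) ** matrix_inv V" for t
    using mexp_similar_diagm_add_rot_gen[OF S_inv SAS[unfolded D_def B] eps_eq, of t]
    by (simp add: L_def B matrix_mul_assoc[symmetric] matrix_inv_left[OF S_inv])
  have red: "\<exists>n1 n2 :: int. \<exists>\<theta>1 \<theta>2. \<theta>1 \<in> {-1/2<..1/2} \<and> \<theta>2 \<in> {-1/2<..1/2} \<and>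
      L t ** matpow_int M1 n1 ** matpow_int M2 n2
        = S ** mexp (t *\<^sub>R B) ** diag_exp (\<theta>1 *\<^sub>R \<omega>1 + \<theta>2 *\<^sub>R \<omega>2) ** matrix_inv V" for t
    unfolding L pow1(1) pow2(1) using eps0
    by (intro conj_diag_exp_reduce[OF V pow1(2) pow2(2) _ indep[folded \<omega>1_def \<omega>2_def]])
      (simp add: sum_distrib_left[symmetric])
  have lattice: "{L t *v n | n. n \<in> int_vecs}
      = {(L t ** matpow_int M1 n1 ** matpow_int M2 n2) *v n | n. n \<in> int_vecs}" for t n1 n2
    using lattice_mult_SL_Z[OF SL_Z_mult[OF SL_Z_matpow_int[OF M1_SL] SL_Z_matpow_int[OF M2_SL]]]
    by (simp add: matrix_mul_assoc)
  have "\<exists>c>0. \<forall>t. \<forall>n\<in>int_vecs - {0}. c \<le> norm (L t *v n)"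
  proof (rule uniform_min_norm_of_reductions[OF S_inv V_orth M1_SL M2_SL _ red])
    show "orthogonal_matrix (mexp (t *\<^sub>R B))" for t
      using orthogonal_mexp_rot_gen by (simp add: B scaleR_rot_gen)
  qed
  then show ?thesis
    unfolding \<omega>1_def[symmetric] \<omega>2_def[symmetric] lattice[symmetric] using red by auto
qed

end
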